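(* Every weakly amenable dual Banach algebra is weakly Connes amenable.
   Context: A dual Banach algebra is a Banach algebra $\mathfrak{A}$ which is the dual of a Banach space $\mathfrak{A}_*$ and whose multiplication is separately $w^*$-continuous. A derivation $D:\mathfrak{A}\to F$ into a Banach $\mathfrak{A}$-bimodule $F$ is a continuous linear map with $D(ab)=D(a)\cdot b+a\cdot D(b)$; it is inner if $D(a)=a\cdot x-x\cdot a$ for some $x\in F$. $\mathfrak{A}$ is weakly amenable if every derivation $\mathfrak{A}\to\mathfrak{A}^*$ is inner. For a Banach $\mathfrak{A}$-bimodule $E$, $\sigma wc(E)$ is the set of $x\in E$ such that $a\mapsto a\cdot x$ and $a\mapsto x\cdot a$ are continuous from $(\mathfrak{A},w^* )$ to $(E,\sigma(E,E^* ))$; it is a closed submodule. Let $j_{\mathfrak{A}}:\mathfrak{A}^*\to\sigma wc(\mathfrak{A})^*$ be the adjoint of the inclusion $\sigma wc(\mathfrak{A})\hookrightarrow\mathfrak{A}$. $\mathfrak{A}$ is weakly Connes amenable if for every derivation $D:\mathfrak{A}\to\mathfrak{A}^*$ such that $j_{\mathfrak{A}}\circ D:\mathfrak{A}\to\sigma wc(\mathfrak{A})^*$ is $w^*$-$w^*$ continuous, the derivation $j_{\mathfrak{A}}\circ D$ is inner. *)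

theory Defs
  imports "HOL-Analysis.Analysis"
begin

text \<open>Scalars are real. A dual Banach algebra is a Banach algebra 'a together with a
predual Banach space 'p and an isometric linear bijection Phi from 'a onto the
dual space 'p \<Rightarrow>L real.\<close>

definition induced_topology :: "'i set \<Rightarrow> ('a \<Rightarrow> 'i \<Rightarrow> real) \<Rightarrow> 'a topology" where
  "induced_topology I ev = pullback_topology UNIV (\<lambda>x. restrict (ev x) I)
      (product_topology (\<lambda>_. euclideanreal) I)"

text \<open>The weak-star topology on 'a, transported along Phi.\<close>
definition wstar_top :: "('a \<Rightarrow> ('p::real_normed_vector \<Rightarrow>\<^sub>L real)) \<Rightarrow> 'a topology" where
  "wstar_top Phi = induced_topology UNIV (\<lambda>a p. blinfun_apply (Phi a) p)"

definition weak_top :: "'a::real_normed_vector topology" where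
  "weak_top = induced_topology (UNIV :: ('a \<Rightarrow>\<^sub>L real) set) (\<lambda>x f. blinfun_apply f x)"

definition dual_banach_algebra ::
  "('a::{real_normed_algebra,banach} \<Rightarrow> ('p::banach \<Rightarrow>\<^sub>L real)) \<Rightarrow> bool" where
  "dual_banach_algebra Phi \<longleftrightarrow>
     linear Phi \<and> bij Phi \<and> (\<forall>a. norm (Phi a) = norm a) \<and>
     (\<forall>a. continuous_map (wstar_top Phi) (wstar_top Phi) (\<lambda>b. a * b)) \<and>
     (\<forall>a. continuous_map (wstar_top Phi) (wstar_top Phi) (\<lambda>b. b * a))"

definition dual_lact :: "'a::real_normed_algebra \<Rightarrow> ('a \<Rightarrow>\<^sub>L real) \<Rightarrow> ('a \<Rightarrow>\<^sub>L real)" where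
  "dual_lact a f = Blinfun (\<lambda>x. f (x * a))"

definition dual_ract :: "('a \<Rightarrow>\<^sub>L real) \<Rightarrow> 'a::real_normed_algebra \<Rightarrow> ('a \<Rightarrow>\<^sub>L real)" where
  "dual_ract f a = Blinfun (\<lambda>x. f (a * x))"

definition dual_derivation :: "('a::real_normed_algebra \<Rightarrow> ('a \<Rightarrow>\<^sub>L real)) \<Rightarrow> bool" where
  "dual_derivation D \<longleftrightarrow> bounded_linear D \<and>
     (\<forall>a b. D (a * b) = dual_ract (D a) b + dual_lact a (D b))"

definition weakly_amenable :: "'a::{real_normed_algebra,banach} itself \<Rightarrow> bool" where
  "weakly_amenable _ \<longleftrightarrow> (\<forall>D :: 'a \<Rightarrow> ('a \<Rightarrow>\<^sub>L real). dual_derivation D \<longrightarrow>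
      (\<exists>f. \<forall>a. D a = dual_lact a f - dual_ract f a))"

definition sigma_wc :: "('a::{real_normed_algebra,banach} \<Rightarrow> ('p::banach \<Rightarrow>\<^sub>L real)) \<Rightarrow> 'a set" where
  "sigma_wc Phi = {x. continuous_map (wstar_top Phi) weak_top (\<lambda>a. a * x) \<and>
                      continuous_map (wstar_top Phi) weak_top (\<lambda>a. x * a)}"

text \<open>Bounded linear functionals on a subspace S (elements of S^*), as functions on 'a
restricted to S.\<close>
definition bounded_linear_on :: "'a::real_normed_vector set \<Rightarrow> ('a \<Rightarrow> real) \<Rightarrow> bool" where
  "bounded_linear_on S phi \<longleftrightarrow>
     (\<forall>x\<in>S. \<forall>y\<in>S. phi (x + y) = phi x + phi y) \<and>
     (\<forall>c. \<forall>x\<in>S. phi (c *\<^sub>R x) = c * phi x) \<and>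
     (\<exists>K. \<forall>x\<in>S. \<bar>phi x\<bar> \<le> K * norm x) \<and>
     (\<forall>x. x \<notin> S \<longrightarrow> phi x = 0)"

text \<open>j_A : A^* \<rightarrow> sigma wc(A)^* is restriction to sigma wc(A); the weak-star topology
of sigma wc(A)^* is generated by evaluations at points of sigma wc(A).\<close>
definition j_map :: "('a::{real_normed_algebra,banach} \<Rightarrow> ('p::banach \<Rightarrow>\<^sub>L real)) \<Rightarrow>
    ('a \<Rightarrow>\<^sub>L real) \<Rightarrow> ('a \<Rightarrow> real)" where
  "j_map Phi f = restrict (blinfun_apply f) (sigma_wc Phi)"

definition sigma_wc_dual_wstar ::
    "('a::{real_normed_algebra,banach} \<Rightarrow> ('p::banach \<Rightarrow>\<^sub>L real)) \<Rightarrow> ('a \<Rightarrow> real) topology" where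
  "sigma_wc_dual_wstar Phi = induced_topology (sigma_wc Phi) (\<lambda>phi s. phi s)"

definition weakly_Connes_amenable ::
    "('a::{real_normed_algebra,banach} \<Rightarrow> ('p::banach \<Rightarrow>\<^sub>L real)) \<Rightarrow> bool" where
  "weakly_Connes_amenable Phi \<longleftrightarrow>
     (\<forall>D :: 'a \<Rightarrow> ('a \<Rightarrow>\<^sub>L real). dual_derivation D \<and>
        continuous_map (wstar_top Phi) (sigma_wc_dual_wstar Phi) (\<lambda>a. j_map Phi (D a)) \<longrightarrow>
        (\<exists>phi. bounded_linear_on (sigma_wc Phi) phi \<and>
           (\<forall>a. \<forall>s\<in>sigma_wc Phi. j_map Phi (D a) s = phi (s * a) - phi (a * s))))"

end

theory Submission
  imports Defs
begin

text \<open>Weak amenability writes a derivation \<open>D\<close> as \<open>D a = a\<cdot>f - f\<cdot>a\<close> for some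
\<open>f \<in> \<AA>\<^sup>*\<close>, so \<open>j\<^sub>\<AA>(D a)(s) = f(s a) - f(a s)\<close> for \<open>s \<in> \<sigma>wc(\<AA>)\<close>. Since
\<open>\<sigma>wc(\<AA>)\<close> is a subspace and a two-sided ideal (weak continuity of bounded linear maps plus
separate weak-star continuity of the multiplication), the restriction of \<open>f\<close> to
\<open>\<sigma>wc(\<AA>)\<close> implements \<open>j\<^sub>\<AA> \<circ> D\<close>.\<close>

lemma continuous_map_weak_top_blinfun:
  fixes g :: "'a::real_normed_vector \<Rightarrow>\<^sub>L real"
  shows "continuous_map weak_top euclideanreal (blinfun_apply g)"
proof -
  have "continuous_map weak_top euclideanreal
      ((\<lambda>k. k g) \<circ> (\<lambda>x. restrict (\<lambda>f. blinfun_apply f x) (UNIV :: ('a \<Rightarrow>\<^sub>L real) set)))"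
    unfolding weak_top_def induced_topology_def
    by (rule continuous_map_pullback) (rule continuous_map_product_projection, simp)
  then show ?thesis
    by (simp add: o_def)
qed

lemma continuous_map_weak_top_iff:
  fixes h :: "'b \<Rightarrow> 'a::real_normed_vector"
  shows "continuous_map X weak_top h \<longleftrightarrow>
    (\<forall>g :: 'a \<Rightarrow>\<^sub>L real. continuous_map X euclideanreal (\<lambda>x. g (h x)))"
proof
  assume h: "continuous_map X weak_top h"
  show "\<forall>g :: 'a \<Rightarrow>\<^sub>L real. continuous_map X euclideanreal (\<lambda>x. g (h x))"
    using continuous_map_compose[OF h continuous_map_weak_top_blinfun] by (simp add: o_def)
next
  assume "\<forall>g :: 'a \<Rightarrow>\<^sub>L real. continuous_map X euclideanreal (\<lambda>x. g (h x))"
  then show "continuous_map X weak_top h"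
    unfolding weak_top_def induced_topology_def
    by (intro continuous_map_pullback') (simp_all add: o_def continuous_map_componentwise_UNIV)
qed

lemma continuous_map_weak_top_bounded_linear:
  fixes T :: "'a::real_normed_vector \<Rightarrow> 'b::real_normed_vector"
  assumes "bounded_linear T"
  shows "continuous_map weak_top weak_top T"
  unfolding continuous_map_weak_top_iff
proof
  fix g :: "'b \<Rightarrow>\<^sub>L real"
  have "bounded_linear (\<lambda>x. g (T x))"
    using bounded_linear_compose[OF blinfun.bounded_linear_right assms] .
  then show "continuous_map weak_top euclideanreal (\<lambda>x. g (T x))"
    using continuous_map_weak_top_blinfun[of "Blinfun (\<lambda>x. g (T x))"]
    by (simp add: bounded_linear_Blinfun_apply)
qed

lemma mem_sigma_wc_iff:
  "s \<in> sigma_wc Phi \<longleftrightarrow>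
    (\<forall>g :: 'a::{real_normed_algebra,banach} \<Rightarrow>\<^sub>L real.
      continuous_map (wstar_top Phi) euclideanreal (\<lambda>a. g (a * s)) \<and>
      continuous_map (wstar_top Phi) euclideanreal (\<lambda>a. g (s * a)))"
  unfolding sigma_wc_def continuous_map_weak_top_iff by blast

lemma subspace_sigma_wc: "subspace (sigma_wc Phi)"
  unfolding subspace_def
  by (auto simp: mem_sigma_wc_iff distrib_left distrib_right blinfun.add_right blinfun.scaleR_right
      continuous_map_add continuous_map_real_mult_left)

context
  fixes Phi :: "'a::{real_normed_algebra,banach} \<Rightarrow> ('p::banach \<Rightarrow>\<^sub>L real)"
  assumes dual: "dual_banach_algebra Phi"
begin

lemma sigma_wc_mult_right:
  assumes "s \<in> sigma_wc Phi"
  shows "s * a \<in> sigma_wc Phi"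
proof -
  have "(\<lambda>b. b * (s * a)) = (\<lambda>x. x * a) \<circ> (\<lambda>b. b * s)"
    and "(\<lambda>b. (s * a) * b) = (\<lambda>b. s * b) \<circ> (\<lambda>b. a * b)"
    by (simp_all add: fun_eq_iff mult.assoc)
  then show ?thesis
    using assms dual continuous_map_weak_top_bounded_linear[OF bounded_linear_mult_left]
    unfolding sigma_wc_def dual_banach_algebra_def by (auto intro: continuous_map_compose)
qed

lemma sigma_wc_mult_left:
  assumes "s \<in> sigma_wc Phi"
  shows "a * s \<in> sigma_wc Phi"
proof -
  have "(\<lambda>b. b * (a * s)) = (\<lambda>b. b * s) \<circ> (\<lambda>b. b * a)"
    and "(\<lambda>b. (a * s) * b) = (\<lambda>x. a * x) \<circ> (\<lambda>b. s * b)"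
    by (simp_all add: fun_eq_iff mult.assoc)
  then show ?thesis
    using assms dual continuous_map_weak_top_bounded_linear[OF bounded_linear_mult_right]
    unfolding sigma_wc_def dual_banach_algebra_def by (auto intro: continuous_map_compose)
qed

end

lemma bounded_linear_on_restrict_blinfun:
  fixes f :: "'a::real_normed_vector \<Rightarrow>\<^sub>L real"
  assumes "subspace S"
  shows "bounded_linear_on S (\<lambda>x. if x \<in> S then f x else 0)"
  unfolding bounded_linear_on_def
proof (intro conjI)
  show "\<exists>K. \<forall>x\<in>S. \<bar>if x \<in> S then f x else 0\<bar> \<le> K * norm x"
    using norm_blinfun[of f] by (auto simp: real_norm_def)
qed (use assms in \<open>auto simp: subspace_add subspace_scale blinfun.add_right blinfun.scaleR_right\<close>)

lemma dual_lact_apply: "dual_lact a f x = f (x * a)"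
  unfolding dual_lact_def
  by (simp add: bounded_linear_Blinfun_apply bounded_linear_compose[OF blinfun.bounded_linear_right
        bounded_linear_mult_left])

lemma dual_ract_apply: "dual_ract f a x = f (a * x)"
  unfolding dual_ract_def
  by (simp add: bounded_linear_Blinfun_apply bounded_linear_compose[OF blinfun.bounded_linear_right
        bounded_linear_mult_right])

theorem theorem3p6:
  fixes Phi :: "'a::{real_normed_algebra,banach} \<Rightarrow> ('p::banach \<Rightarrow>\<^sub>L real)"
  assumes "dual_banach_algebra Phi"
    and "weakly_amenable TYPE('a)"
  shows "weakly_Connes_amenable Phi"
  unfolding weakly_Connes_amenable_def
proof (intro allI impI)
  fix D :: "'a \<Rightarrow> ('a \<Rightarrow>\<^sub>L real)"
  assume "dual_derivation D \<and>
    continuous_map (wstar_top Phi) (sigma_wc_dual_wstar Phi) (\<lambda>a. j_map Phi (D a))"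
  with assms(2) obtain f where f: "\<And>a. D a = dual_lact a f - dual_ract f a"
    unfolding weakly_amenable_def by blast
  define phi where "phi x = (if x \<in> sigma_wc Phi then f x else 0)" for x
  have "bounded_linear_on (sigma_wc Phi) phi"
    unfolding phi_def by (rule bounded_linear_on_restrict_blinfun[OF subspace_sigma_wc])
  moreover have "\<forall>a. \<forall>s\<in>sigma_wc Phi. j_map Phi (D a) s = phi (s * a) - phi (a * s)"
    using sigma_wc_mult_left[OF assms(1)] sigma_wc_mult_right[OF assms(1)]
    by (simp add: j_map_def phi_def f blinfun.diff_left dual_lact_apply dual_ract_apply)
  ultimately show "\<exists>phi. bounded_linear_on (sigma_wc Phi) phi \<and>
      (\<forall>a. \<forall>s\<in>sigma_wc Phi. j_map Phi (D a) s = phi (s * a) - phi (a * s))"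
    by blast
qed

end
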